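(* Let $M=(r,q,u)$ be an IC and IR mechanism. (1) If $M$ is undominated, then $M$ is floor-randomized, left continuous, and satisfies DD. (2) If $M$ is dominated, then $M$ is dominated by a mechanism that is floor-randomized, left continuous and satisfies DD.
   Context: Setting. Let $\Theta=[\underline\theta,\overline\theta]$ with $0<\underline\theta<\overline\theta$. Let $c>0$ and let $P:\mathbb R_+\to\mathbb R_+$ be continuous and strictly decreasing with $P(\overline q)=0$ for some $\overline q>0$. Put $V(q)=\int_0^q P(z)\,dz$ and $\mathrm{TS}(\theta,q)=V(q)-c-\theta q$ for $q>0$, $\mathrm{TS}(\theta,0)=0$. Assume (A2): $\mathrm{TS}(\overline\theta,P^{-1}(\overline\theta))>0$. A mechanism is a triple $M=(r,q,u)$ of functions $r:\Theta\to[0,1]$, $q:\Theta\to[0,\overline q]$, $u:\Theta\to\mathbb R$ with $q(\theta)=0$ if and only if $r(\theta)=0$. It is IC if $u(\theta)\ge u(\theta')+(\theta'-\theta)q(\theta')r(\theta')$ for all $\theta,\theta'\in\Theta$, and IR if $u(\theta)\ge 0$ for all $\theta$. (Known fact: $M$ is IC iff $\theta\mapsto q(\theta)r(\theta)$ is nonincreasing and $u(\theta)=u(\overline\theta)+\int_\theta^{\overline\theta}q(z)r(z)\,dz$ for all $\theta$; an IC mechanism is IR iff $u(\overline\theta)\ge0$.) Fix $\alpha\in[0,1)$. The regulator's surplus at $\theta$ is $\mathrm{RS}_\alpha(\theta,M)=r(\theta)\,\mathrm{TS}(\theta,q(\theta))-(1-\alpha)u(\theta)$. An IC and IR mechanism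 $\tilde M$ dominates an IC and IR mechanism $M$ if $\mathrm{RS}_\alpha(\theta,\tilde M)\ge \mathrm{RS}_\alpha(\theta,M)$ for all $\theta\in\Theta$ with strict inequality for some $\theta$; $M$ is undominated if it is IC, IR and not dominated by any IC and IR mechanism. The quantity floor $\hat q$ is the unique $q>0$ with $V(q)-qP(q)=c$. A mechanism $(r,q,u)$ is floor-randomized if it is IC, IR, $u(\overline\theta)=0$, and $\Theta$ can be partitioned into three pairwise disjoint (possibly empty) intervals $\Theta_1,\Theta_{01},\Theta_0$, with every element of $\Theta_0$ larger than every element of $\Theta_{01}$ and every element of $\Theta_{01}$ larger than every element of $\Theta_1$, such that: $q(\theta)\ge\hat q$ and $r(\theta)=1$ for $\theta\in\Theta_1$; $q(\theta)=\hat q$ and $r(\theta)\in(0,1)$ for $\theta\in\Theta_{01}$; $q(\theta)=r(\theta)=0$ for $\theta\in\Theta_0$. The efficient quantity is $q_e(\theta)=P^{-1}(\theta)$. A mechanism satisfies downward distortion (DD) if $q(\theta)\le q_e(\theta)$ for all $\theta$, with equality at $\theta=\underline\theta$; it satisfies strict DD if moreover $q(\theta)<q_e(\theta)$ for every $\theta>\underline\theta$. A mechanism is left continuous if $\theta\mapsto q(\theta)r(\theta)$ is left continuous at every $\theta\in(\underline\theta,\overline\theta]$. *)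

theory Defs
  imports "HOL-Analysis.Analysis"
begin

text \<open>Type space Theta = {tlo..thi}. A mechanism is given by three functions r q u
  (only their values on Theta matter).\<close>

definition V :: "(real \<Rightarrow> real) \<Rightarrow> real \<Rightarrow> real" where
  "V P q = integral {0..q} P"

definition TS :: "real \<Rightarrow> (real \<Rightarrow> real) \<Rightarrow> real \<Rightarrow> real \<Rightarrow> real" where
  "TS c P \<theta> q = (if q > 0 then V P q - c - \<theta> * q else 0)"

definition q_eff :: "(real \<Rightarrow> real) \<Rightarrow> real \<Rightarrow> real \<Rightarrow> real" where
  "q_eff P qbar \<theta> = (THE q. 0 \<le> q \<and> q \<le> qbar \<and> P q = \<theta>)"

definition q_floor :: "real \<Rightarrow> (real \<Rightarrow> real) \<Rightarrow> real \<Rightarrow> real" where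
  "q_floor c P qbar = (THE q. 0 < q \<and> q \<le> qbar \<and> V P q - q * P q = c)"

definition mechanism :: "real \<Rightarrow> real \<Rightarrow> real \<Rightarrow> (real \<Rightarrow> real) \<Rightarrow> (real \<Rightarrow> real) \<Rightarrow> (real \<Rightarrow> real) \<Rightarrow> bool" where
  "mechanism tlo thi qbar r q u \<longleftrightarrow>
     (\<forall>\<theta>\<in>{tlo..thi}. 0 \<le> r \<theta> \<and> r \<theta> \<le> 1 \<and> 0 \<le> q \<theta> \<and> q \<theta> \<le> qbar \<and> (q \<theta> = 0 \<longleftrightarrow> r \<theta> = 0))"

definition IC :: "real \<Rightarrow> real \<Rightarrow> (real \<Rightarrow> real) \<Rightarrow> (real \<Rightarrow> real) \<Rightarrow> (real \<Rightarrow> real) \<Rightarrow> bool" where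
  "IC tlo thi r q u \<longleftrightarrow>
     (\<forall>\<theta>\<in>{tlo..thi}. \<forall>\<theta>'\<in>{tlo..thi}. u \<theta> \<ge> u \<theta>' + (\<theta>' - \<theta>) * q \<theta>' * r \<theta>')"

definition IR :: "real \<Rightarrow> real \<Rightarrow> (real \<Rightarrow> real) \<Rightarrow> bool" where
  "IR tlo thi u \<longleftrightarrow> (\<forall>\<theta>\<in>{tlo..thi}. u \<theta> \<ge> 0)"

definition IC_IR :: "real \<Rightarrow> real \<Rightarrow> real \<Rightarrow> (real \<Rightarrow> real) \<Rightarrow> (real \<Rightarrow> real) \<Rightarrow> (real \<Rightarrow> real) \<Rightarrow> bool" where
  "IC_IR tlo thi qbar r q u \<longleftrightarrow> mechanism tlo thi qbar r q u \<and> IC tlo thi r q u \<and> IR tlo thi u"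

definition RS :: "real \<Rightarrow> (real \<Rightarrow> real) \<Rightarrow> real \<Rightarrow> real \<Rightarrow> (real \<Rightarrow> real) \<Rightarrow> (real \<Rightarrow> real) \<Rightarrow> (real \<Rightarrow> real) \<Rightarrow> real" where
  "RS c P \<alpha> \<theta> r q u = r \<theta> * TS c P \<theta> (q \<theta>) - (1 - \<alpha>) * u \<theta>"

definition dominates :: "real \<Rightarrow> real \<Rightarrow> real \<Rightarrow> real \<Rightarrow> (real \<Rightarrow> real) \<Rightarrow> real \<Rightarrow>
    (real \<Rightarrow> real) \<Rightarrow> (real \<Rightarrow> real) \<Rightarrow> (real \<Rightarrow> real) \<Rightarrow>
    (real \<Rightarrow> real) \<Rightarrow> (real \<Rightarrow> real) \<Rightarrow> (real \<Rightarrow> real) \<Rightarrow> bool" where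
  "dominates tlo thi qbar c P \<alpha> r' q' u' r q u \<longleftrightarrow>
     IC_IR tlo thi qbar r' q' u' \<and> IC_IR tlo thi qbar r q u \<and>
     (\<forall>\<theta>\<in>{tlo..thi}. RS c P \<alpha> \<theta> r' q' u' \<ge> RS c P \<alpha> \<theta> r q u) \<and>
     (\<exists>\<theta>\<in>{tlo..thi}. RS c P \<alpha> \<theta> r' q' u' > RS c P \<alpha> \<theta> r q u)"

definition undominated :: "real \<Rightarrow> real \<Rightarrow> real \<Rightarrow> real \<Rightarrow> (real \<Rightarrow> real) \<Rightarrow> real \<Rightarrow>
    (real \<Rightarrow> real) \<Rightarrow> (real \<Rightarrow> real) \<Rightarrow> (real \<Rightarrow> real) \<Rightarrow> bool" where
  "undominated tlo thi qbar c P \<alpha> r q u \<longleftrightarrow>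
     IC_IR tlo thi qbar r q u \<and> \<not> (\<exists>r' q' u'. dominates tlo thi qbar c P \<alpha> r' q' u' r q u)"

definition floor_randomized :: "real \<Rightarrow> real \<Rightarrow> real \<Rightarrow> real \<Rightarrow> (real \<Rightarrow> real) \<Rightarrow>
    (real \<Rightarrow> real) \<Rightarrow> (real \<Rightarrow> real) \<Rightarrow> (real \<Rightarrow> real) \<Rightarrow> bool" where
  "floor_randomized tlo thi qbar c P r q u \<longleftrightarrow>
     IC_IR tlo thi qbar r q u \<and> u thi = 0 \<and>
     (\<exists>T1 T01 T0. is_interval T1 \<and> is_interval T01 \<and> is_interval T0 \<and>
        T1 \<union> T01 \<union> T0 = {tlo..thi} \<and>
        T1 \<inter> T01 = {} \<and> T1 \<inter> T0 = {} \<and> T01 \<inter> T0 = {} \<and>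
        (\<forall>x\<in>T0. \<forall>y\<in>T01. y < x) \<and> (\<forall>x\<in>T01. \<forall>y\<in>T1. y < x) \<and>
        (\<forall>\<theta>\<in>T1. q \<theta> \<ge> q_floor c P qbar \<and> r \<theta> = 1) \<and>
        (\<forall>\<theta>\<in>T01. q \<theta> = q_floor c P qbar \<and> 0 < r \<theta> \<and> r \<theta> < 1) \<and>
        (\<forall>\<theta>\<in>T0. q \<theta> = 0 \<and> r \<theta> = 0))"

definition left_continuous_mech :: "real \<Rightarrow> real \<Rightarrow> (real \<Rightarrow> real) \<Rightarrow> (real \<Rightarrow> real) \<Rightarrow> bool" where
  "left_continuous_mech tlo thi r q \<longleftrightarrow>
     (\<forall>\<theta>\<in>{tlo<..thi}. continuous (at_left \<theta>) (\<lambda>t. q t * r t))"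

definition downward_distortion :: "real \<Rightarrow> real \<Rightarrow> (real \<Rightarrow> real) \<Rightarrow> real \<Rightarrow> (real \<Rightarrow> real) \<Rightarrow> bool" where
  "downward_distortion tlo thi P qbar q \<longleftrightarrow>
     (\<forall>\<theta>\<in>{tlo..thi}. q \<theta> \<le> q_eff P qbar \<theta>) \<and> q tlo = q_eff P qbar tlo"

end

theory Submission
  imports Defs
begin

text \<open>Write x = q r for the expected quantity of a mechanism. By the envelope formula, IC pins down
  the rents by x alone, while for a given x the surplus r TS(q) is maximised uniquely by selling x
  outright when x \<ge> qf and by selling the floor quantity qf with probability x / qf otherwise.
  Replacing x by the left-continuous lower envelope of min(x, q_e), raised to q_e at the bottom type,
  keeps x nonincreasing, moves it towards the efficient quantity (which can only raise the split
  surplus) and lowers every rent. The resulting floor-randomized mechanism is therefore weakly better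
  at every type, and strictly better somewhere unless it coincides with the original one.\<close>

lemma uniform_partition_increment_bound:
  fixes h z :: "real \<Rightarrow> real" and n :: nat
  assumes "s < e" and "n > 0"
    and step: "\<And>x y. s \<le> x \<Longrightarrow> x < y \<Longrightarrow> y \<le> e \<Longrightarrow> (y - x) * (z y - z x) \<le> h x - h y"
    and bounded: "\<And>x. x \<in> {s..e} \<Longrightarrow> 0 \<le> z x \<and> z x \<le> B"
  shows "h e - h s \<le> (e - s) / real n * B"
proof -
  define d where "d = (e - s) / real n"
  define T where "T k = s + real k * d" for k :: nat
  have "d > 0" using assms(1,2) by (simp add: d_def)
  have T_0: "T 0 = s" and T_n: "T n = e" using \<open>n > 0\<close> by (simp_all add: T_def d_def)
  have T_in: "s \<le> T k \<and> T k \<le> e" if "k \<le> n" for k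
  proof -
    have "0 \<le> real k * d" and "real k * d \<le> real n * d" using that \<open>d > 0\<close> by simp_all
    moreover have "real n * d = e - s" using \<open>n > 0\<close> by (simp add: d_def)
    ultimately show ?thesis by (simp add: T_def)
  qed
  have T_step: "T (Suc k) - T k = d" for k by (simp add: T_def algebra_simps)
  have "(\<Sum>k<n. d * (z (T (Suc k)) - z (T k))) \<le> (\<Sum>k<n. h (T k) - h (T (Suc k)))"
  proof (rule sum_mono)
    fix k assume "k \<in> {..<n}"
    then have "(T (Suc k) - T k) * (z (T (Suc k)) - z (T k)) \<le> h (T k) - h (T (Suc k))"
      using T_in[of k] T_in[of "Suc k"] T_step[of k] \<open>d > 0\<close> by (intro step) auto
    then show "d * (z (T (Suc k)) - z (T k)) \<le> h (T k) - h (T (Suc k))" by (simp add: T_step)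
  qed
  moreover have "(\<Sum>k<n. h (T k) - h (T (Suc k))) = h s - h e"
    using sum_lessThan_telescope'[of "\<lambda>k. h (T k)" n] by (simp add: T_0 T_n)
  moreover have "(\<Sum>k<n. d * (z (T (Suc k)) - z (T k))) = d * (z e - z s)"
    using sum_lessThan_telescope[of "\<lambda>k. z (T k)" n]
    by (simp add: sum_distrib_left[symmetric] T_0 T_n)
  ultimately have "d * (z e - z s) \<le> h s - h e" by simp
  moreover have "- B \<le> z e - z s" using bounded[of e] bounded[of s] \<open>s < e\<close> by auto
  ultimately have "d * (- B) \<le> h s - h e"
    using \<open>d > 0\<close> by (meson mult_left_mono order_trans less_imp_le)
  then show ?thesis by (simp add: d_def)
qed

lemma endpoint_le_of_increment_bound:
  fixes h z :: "real \<Rightarrow> real"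
  assumes "s < e"
    and step: "\<And>x y. s \<le> x \<Longrightarrow> x < y \<Longrightarrow> y \<le> e \<Longrightarrow> (y - x) * (z y - z x) \<le> h x - h y"
    and bounded: "\<And>x. x \<in> {s..e} \<Longrightarrow> 0 \<le> z x \<and> z x \<le> B"
  shows "h e \<le> h s"
proof (rule field_le_epsilon)
  fix \<epsilon> :: real assume "0 < \<epsilon>"
  obtain n :: nat where n: "(e - s) * B < real n * \<epsilon>"
    using reals_Archimedean3[OF \<open>0 < \<epsilon>\<close>] by blast
  have "0 \<le> B" using bounded[of s] \<open>s < e\<close> by auto
  then have "n > 0" using n \<open>s < e\<close> by (cases n) (auto simp: mult_less_0_iff)
  then have "(e - s) / real n * B \<le> \<epsilon>" using n by (simp add: field_simps)
  then show "h e \<le> h s + \<epsilon>"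
    using uniform_partition_increment_bound[OF \<open>s < e\<close> \<open>n > 0\<close> step bounded] by simp
qed

lemma antimono_on_integrable:
  fixes z :: "real \<Rightarrow> real"
  assumes "antimono_on {s..e} z"
  shows "z integrable_on {s..e}"
proof -
  have "mono_on {s..e} (\<lambda>x. - z x)" using assms by (auto simp: monotone_on_def)
  then show ?thesis using integrable_neg[OF integrable_on_mono_on] by fastforce
qed

lemma antimono_on_integral_bounds:
  fixes z :: "real \<Rightarrow> real"
  assumes "antimono_on {x..y} z" and "x \<le> y"
  shows "(y - x) * z y \<le> integral {x..y} z" and "integral {x..y} z \<le> (y - x) * z x"
proof -
  have z: "z integrable_on {x..y}" using assms(1) by (rule antimono_on_integrable)
  have "integral {x..y} (\<lambda>_. z y) \<le> integral {x..y} z"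
    by (rule integral_le) (use z assms in \<open>auto simp: monotone_on_def\<close>)
  moreover have "integral {x..y} z \<le> integral {x..y} (\<lambda>_. z x)"
    by (rule integral_le) (use z assms in \<open>auto simp: monotone_on_def\<close>)
  ultimately show "(y - x) * z y \<le> integral {x..y} z" and "integral {x..y} z \<le> (y - x) * z x"
    using assms(2) by simp_all
qed

text \<open>The lower Riemann sums of z telescope against w, and on a fine uniform partition they
  differ from the integral by at most the mesh times the total variation of z.\<close>

lemma antimono_on_integral_le_of_step_bound:
  fixes z w :: "real \<Rightarrow> real"
  assumes anti: "antimono_on {s..e} z" and "s \<le> e"
    and bounded: "\<And>x. x \<in> {s..e} \<Longrightarrow> 0 \<le> z x \<and> z x \<le> B"
    and step: "\<And>x y. s \<le> x \<Longrightarrow> x < y \<Longrightarrow> y \<le> e \<Longrightarrow> (y - x) * z y \<le> w x - w y"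
  shows "integral {s..e} z \<le> w s - w e"
proof (cases "s = e")
  case False
  define h where "h x = w x - integral {x..e} z" for x
  have "h e \<le> h s"
  proof (rule endpoint_le_of_increment_bound[where h = h and z = z and s = s and e = e])
    show "s < e" using \<open>s \<le> e\<close> False by simp
    show "\<And>x. x \<in> {s..e} \<Longrightarrow> 0 \<le> z x \<and> z x \<le> B" by (rule bounded)
  next
    fix x y assume xy: "s \<le> x" "x < y" "y \<le> e"
    have anti_xe: "antimono_on {x..e} z" using anti by (rule monotone_on_subset) (use xy in auto)
    have "integral {x..y} z + integral {y..e} z = integral {x..e} z"
      using Henstock_Kurzweil_Integration.integral_combine[where a = x and c = y and b = e and f = z]
        antimono_on_integrable[OF anti_xe] xy by auto
    moreover have "integral {x..y} z \<le> (y - x) * z x"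
      using anti_xe xy by (intro antimono_on_integral_bounds(2) monotone_on_subset[OF anti_xe]) auto
    ultimately show "(y - x) * (z y - z x) \<le> h x - h y"
      using step[OF xy] unfolding h_def by (simp add: algebra_simps)
  qed
  then show ?thesis unfolding h_def by simp
qed simp

lemma is_interval_antimono_on_preimage:
  fixes z :: "real \<Rightarrow> real"
  assumes "antimono_on {a..b} z" and "is_interval I"
  shows "is_interval {t \<in> {a..b}. z t \<in> I}"
  unfolding is_interval_1
proof (intro ballI allI impI)
  fix s t v assume s: "s \<in> {t \<in> {a..b}. z t \<in> I}" and t: "t \<in> {t \<in> {a..b}. z t \<in> I}"
    and v: "s \<le> v \<and> v \<le> t"
  then have "z t \<le> z v" "z v \<le> z s" using assms(1) by (auto simp: monotone_on_def)
  then show "v \<in> {t \<in> {a..b}. z t \<in> I}"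
    using s t v assms(2) unfolding is_interval_1 by auto
qed

locale regulation =
  fixes a b c qbar \<alpha> :: real and P :: "real \<Rightarrow> real"
  assumes a_pos: "0 < a" and a_less_b: "a < b" and c_pos: "0 < c" and qbar_pos: "0 < qbar"
    and P_cont: "continuous_on {0..qbar} P"
    and P_decreasing: "\<forall>x y. 0 \<le> x \<longrightarrow> x < y \<longrightarrow> y \<le> qbar \<longrightarrow> P y < P x"
    and P_qbar: "P qbar = 0"
    and A2: "\<exists>q\<in>{0..qbar}. P q = b \<and> TS c P b q > 0"
    and alpha_less_1: "\<alpha> < 1"
begin

abbreviation "qf \<equiv> q_floor c P qbar"
abbreviation "qe \<equiv> q_eff P qbar"

lemma P_less: "0 \<le> x \<Longrightarrow> x < y \<Longrightarrow> y \<le> qbar \<Longrightarrow> P y < P x"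
  using P_decreasing by blast

lemma P_le: "0 \<le> x \<Longrightarrow> x \<le> y \<Longrightarrow> y \<le> qbar \<Longrightarrow> P y \<le> P x"
  using P_less by (cases "x = y") (auto intro: less_imp_le)

lemma P_integrable: "0 \<le> p \<Longrightarrow> q \<le> qbar \<Longrightarrow> P integrable_on {p..q}"
  using integrable_continuous_real[OF P_cont] by (rule integrable_subinterval_real) auto

lemma V_diff: "0 \<le> p \<Longrightarrow> p \<le> q \<Longrightarrow> q \<le> qbar \<Longrightarrow> V P q - V P p = integral {p..q} P"
  using Henstock_Kurzweil_Integration.integral_combine[where f = P and a = 0 and c = p and b = q]
    P_integrable[of 0 q] unfolding V_def by simp

lemma V_0: "V P 0 = 0"
  unfolding V_def by simp

lemma V_continuous: "continuous_on {0..qbar} (V P)"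
  using indefinite_integral_continuous_1[OF P_integrable[of 0 qbar]] unfolding V_def[abs_def] by simp

lemma V_increment_le:
  assumes "0 \<le> p" "p \<le> qbar" "0 \<le> q" "q \<le> qbar"
  shows "V P q - V P p \<le> (q - p) * P p"
proof (cases "p \<le> q")
  case True
  have "integral {p..q} P \<le> integral {p..q} (\<lambda>_. P p)"
    by (rule integral_le) (use assms True P_integrable[of p q] P_le in auto)
  then show ?thesis using V_diff[of p q] assms True by simp
next
  case False
  have "integral {q..p} (\<lambda>_. P p) \<le> integral {q..p} P"
    by (rule integral_le) (use assms False P_integrable[of q p] P_le in auto)
  then show ?thesis using V_diff[of q p] assms False by (simp add: algebra_simps)
qed

lemma V_increment_less:
  assumes "0 \<le> p" "p \<le> qbar" "0 \<le> q" "q \<le> qbar" "q \<noteq> p"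
  shows "V P q - V P p < (q - p) * P p"
proof -
  define m where "m = (p + q) / 2"
  have m: "0 \<le> m" "m \<le> qbar" using assms by (auto simp: m_def)
  have "V P q - V P m \<le> (q - m) * P m" and "V P m - V P p \<le> (m - p) * P p"
    using assms m by (auto intro: V_increment_le)
  moreover have "(q - m) * P m < (q - m) * P p"
  proof (cases "p < q")
    case True
    then show ?thesis using P_less[of p m] assms by (simp add: m_def)
  next
    case False
    then show ?thesis using P_less[of m p] assms
      by (simp add: m_def mult_strict_left_mono_neg)
  qed
  moreover have "(q - p) * P p = (q - m) * P p + (m - p) * P p" by (simp add: algebra_simps)
  ultimately show ?thesis by linarith
qed

text \<open>Consumer surplus when quantity q is sold at the market-clearing price P q; the quantity
  floor is where it covers the fixed cost c.\<close>

definition CS :: "real \<Rightarrow> real" where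
  "CS q = V P q - q * P q"

lemma CS_mono: "0 \<le> p \<Longrightarrow> p \<le> q \<Longrightarrow> q \<le> qbar \<Longrightarrow> CS p \<le> CS q"
  using V_increment_le[of q p] P_le[of p q] mult_left_mono[of "P q" "P p" p]
  unfolding CS_def by (simp add: algebra_simps)

lemma CS_strict_mono:
  assumes "0 < p" "p < q" "q \<le> qbar"
  shows "CS p < CS q"
proof -
  have "V P p - V P q \<le> (p - q) * P q" using V_increment_le[of q p] assms by simp
  moreover have "p * P q < p * P p" using P_less[of p q] assms by simp
  moreover have "(p - q) * P q = p * P q - q * P q" by (simp add: algebra_simps)
  ultimately show ?thesis unfolding CS_def by linarith
qed

lemma CS_continuous: "continuous_on {0..qbar} CS"
  unfolding CS_def[abs_def] by (intro continuous_intros V_continuous P_cont)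

lemma q_eff_eqI: "0 \<le> q \<Longrightarrow> q \<le> qbar \<Longrightarrow> P q = t \<Longrightarrow> qe t = q"
  unfolding q_eff_def
proof (rule the_equality)
  fix q' assume "0 \<le> q' \<and> q' \<le> qbar \<and> P q' = t" and "0 \<le> q" "q \<le> qbar" "P q = t"
  then show "q' = q" using P_less[of q q'] P_less[of q' q] by (cases q q' rule: linorder_cases) auto
qed auto

lemma P_0_ge_b: "b \<le> P 0"
  using A2 P_le[of 0] by fastforce

lemma q_eff:
  assumes "0 \<le> t" "t \<le> b"
  shows "0 \<le> qe t" "qe t \<le> qbar" "P (qe t) = t"
proof -
  obtain q where "0 \<le> q" "q \<le> qbar" "P q = t"
    using IVT2'[of P qbar t 0] assms P_0_ge_b P_qbar qbar_pos P_cont by auto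
  then show "0 \<le> qe t" "qe t \<le> qbar" "P (qe t) = t" using q_eff_eqI by auto
qed

lemma q_eff_Theta: "t \<in> {a..b} \<Longrightarrow> 0 \<le> qe t \<and> qe t \<le> qbar \<and> P (qe t) = t"
  using q_eff[of t] a_pos by auto

lemma q_eff_antimono: "t \<in> {a..b} \<Longrightarrow> t' \<in> {a..b} \<Longrightarrow> t \<le> t' \<Longrightarrow> qe t' \<le> qe t"
  using P_less[of "qe t" "qe t'"] q_eff_Theta[of t] q_eff_Theta[of t'] by force

lemma CS_q_eff_b: "c < CS (qe b)"
proof -
  obtain q where q: "0 \<le> q" "q \<le> qbar" "P q = b" "TS c P b q > 0" using A2 by auto
  then have "q > 0" unfolding TS_def by (auto split: if_splits)
  then show ?thesis using q q_eff_eqI[OF q(1-3)] unfolding TS_def CS_def by (simp add: algebra_simps)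
qed

lemma q_floor: "0 < qf" "qf \<le> qbar" "CS qf = c"
proof -
  have qe_b: "0 \<le> qe b" "qe b \<le> qbar" using q_eff[of b] a_pos a_less_b by auto
  obtain x where x: "0 \<le> x" "x \<le> qe b" "CS x = c"
    using IVT'[of CS 0 c "qe b"] continuous_on_subset[OF CS_continuous] qe_b CS_q_eff_b c_pos
    by (auto simp: CS_def V_0)
  have "x \<noteq> 0" using x c_pos by (auto simp: CS_def V_0)
  then have "qf = x"
    unfolding q_floor_def
  proof (intro the_equality)
    fix y assume "0 < y \<and> y \<le> qbar \<and> V P y - y * P y = c"
    then show "y = x" using x \<open>x \<noteq> 0\<close> qe_b CS_strict_mono[of x y] CS_strict_mono[of y x]
      unfolding CS_def by (cases x y rule: linorder_cases) auto
  qed (use x qe_b in \<open>auto simp: CS_def\<close>)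
  then show "0 < qf" "qf \<le> qbar" "CS qf = c" using x \<open>x \<noteq> 0\<close> qe_b by auto
qed

lemma V_q_floor: "V P qf = c + qf * P qf"
  using q_floor(3) unfolding CS_def by simp

lemma CS_ge: "qf \<le> x \<Longrightarrow> x \<le> qbar \<Longrightarrow> c \<le> CS x"
  using CS_mono[of qf x] q_floor by auto

lemma q_floor_less_q_eff_b: "qf < qe b"
  using CS_mono[of "qe b" qf] q_floor q_eff[of b] CS_q_eff_b a_pos a_less_b by force

lemma q_floor_less_q_eff: "t \<in> {a..b} \<Longrightarrow> qf < qe t"
  using q_eff_antimono[of t b] q_floor_less_q_eff_b a_less_b by force

lemma P_q_floor: "b < P qf"
  using P_less[of qf "qe b"] q_floor q_floor_less_q_eff_b q_eff[of b] a_pos a_less_b by auto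

text \<open>The best way to deliver an expected quantity x: sell x outright if x \<ge> qf, otherwise sell
  the floor quantity qf with probability x / qf. split_value t x is the resulting expected total
  surplus at type t; no other lottery with mean quantity x does as well.\<close>

definition floor_prob :: "real \<Rightarrow> real" where
  "floor_prob x = (if qf \<le> x then 1 else x / qf)"

definition floor_qty :: "real \<Rightarrow> real" where
  "floor_qty x = (if qf \<le> x then x else if 0 < x then qf else 0)"

definition split_value :: "real \<Rightarrow> real \<Rightarrow> real" where
  "split_value t x = (if qf \<le> x then V P x - c - t * x else x * (P qf - t))"

lemma floor_qty_mult_prob: "0 \<le> x \<Longrightarrow> floor_qty x * floor_prob x = x"
  using q_floor unfolding floor_prob_def floor_qty_def by auto

lemma floor_prob_range: "0 \<le> x \<Longrightarrow> 0 \<le> floor_prob x \<and> floor_prob x \<le> 1"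
  using q_floor unfolding floor_prob_def by auto

lemma floor_qty_range: "0 \<le> x \<Longrightarrow> x \<le> qbar \<Longrightarrow> 0 \<le> floor_qty x \<and> floor_qty x \<le> qbar"
  using q_floor unfolding floor_qty_def by auto

lemma floor_qty_eq_0_iff: "0 \<le> x \<Longrightarrow> floor_qty x = 0 \<longleftrightarrow> floor_prob x = 0"
  using q_floor unfolding floor_prob_def floor_qty_def by auto

lemma floor_TS_eq_split_value: "0 \<le> x \<Longrightarrow> floor_prob x * TS c P t (floor_qty x) = split_value t x"
  using q_floor unfolding floor_prob_def floor_qty_def split_value_def TS_def
  by (auto simp: field_simps V_q_floor)

lemma randomized_TS_less_split_value_above_floor:
  assumes r: "0 < r" "r < 1" and q: "0 < q" "q \<le> qbar" and floor: "qf \<le> q * r"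
  shows "r * TS c P t q < split_value t (q * r)"
proof -
  define x where "x = q * r"
  have "0 < x" "x < q" using r q by (simp_all add: x_def)
  then have "x \<le> qbar" using q by simp
  have "r * (V P q - V P x) < r * ((q - x) * P x)"
    using V_increment_less[of x q] \<open>0 < x\<close> \<open>x < q\<close> q r by simp
  also have "\<dots> = (1 - r) * (x * P x)" by (simp add: x_def algebra_simps)
  also have "\<dots> \<le> (1 - r) * (V P x - c)"
    using CS_ge[of x] floor \<open>x \<le> qbar\<close> r by (simp add: x_def CS_def)
  finally have "r * V P q - r * c < V P x - c"
    by (simp add: algebra_simps)
  then show ?thesis using floor q by (simp add: split_value_def TS_def x_def algebra_simps)
qed

lemma randomized_TS_less_split_value_below_floor:
  assumes r: "0 < r" and q: "0 < q" "q \<le> qbar" "q \<noteq> qf" and below: "q * r < qf"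
  shows "r * TS c P t q < split_value t (q * r)"
proof -
  have "V P q - V P qf < (q - qf) * P qf" using V_increment_less[of qf q] q q_floor by simp
  then have "V P q - c < q * P qf" by (simp add: V_q_floor algebra_simps)
  then have "r * (V P q - c) < r * (q * P qf)" using r by (rule mult_strict_left_mono)
  then show ?thesis using below q unfolding split_value_def TS_def by (simp add: algebra_simps)
qed

lemma randomized_TS_less_split_value:
  assumes r: "0 \<le> r" "r \<le> 1" and q: "0 \<le> q" "q \<le> qbar" and "q = 0 \<longleftrightarrow> r = 0"
    and not_floor: "r \<noteq> floor_prob (q * r) \<or> q \<noteq> floor_qty (q * r)"
  shows "r * TS c P t q < split_value t (q * r)"
proof -
  have "0 < r" "0 < q"
    using assms q_floor unfolding floor_prob_def floor_qty_def by (auto split: if_splits)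
  have "r < 1" if "qf \<le> q * r"
    using that not_floor r unfolding floor_prob_def floor_qty_def by auto
  moreover have "q \<noteq> qf" if "q * r < qf"
    using that not_floor \<open>0 < r\<close> \<open>0 < q\<close> unfolding floor_prob_def floor_qty_def by auto
  ultimately consider "qf \<le> q * r" "r < 1" | "q * r < qf" "q \<noteq> qf" by fastforce
  then show ?thesis
    by cases (use \<open>0 < r\<close> \<open>0 < q\<close> q in \<open>auto intro: randomized_TS_less_split_value_above_floor
      randomized_TS_less_split_value_below_floor\<close>)
qed

lemma randomized_TS_le_split_value:
  assumes "0 \<le> r" "r \<le> 1" "0 \<le> q" "q \<le> qbar" "q = 0 \<longleftrightarrow> r = 0"
  shows "r * TS c P t q \<le> split_value t (q * r)"
proof (cases "r = floor_prob (q * r) \<and> q = floor_qty (q * r)")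
  case True
  then have "r * TS c P t q = floor_prob (q * r) * TS c P t (floor_qty (q * r))" by metis
  then show ?thesis using floor_TS_eq_split_value[of "q * r" t] assms by simp
next
  case False
  then show ?thesis by (intro less_imp_le randomized_TS_less_split_value[OF assms]) auto
qed

lemma split_value_strict_mono:
  assumes t: "t \<in> {a..b}" and x: "0 \<le> x" "x < x'" "x' \<le> qe t"
  shows "split_value t x < split_value t x'"
proof -
  have "t < P qf" using t P_q_floor by auto
  have qe_t: "0 \<le> qe t" "qe t \<le> qbar" "P (qe t) = t" using q_eff_Theta[OF t] by auto
  have "t \<le> P x'" using P_le[of x' "qe t"] qe_t x by auto
  then have t_x': "(x' - x) * t \<le> (x' - x) * P x'" using x by simp
  consider "x' < qf" | "x < qf" "qf \<le> x'" | "qf \<le> x" by linarith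
  then show ?thesis
  proof cases
    case 1
    then show ?thesis using x \<open>t < P qf\<close> unfolding split_value_def by simp
  next
    case 2
    have "x * (P qf - t) < qf * (P qf - t)" using 2 \<open>t < P qf\<close> by simp
    moreover have "V P qf - V P x' \<le> (qf - x') * P x'"
      by (rule V_increment_le) (use q_floor 2 x qe_t in auto)
    moreover have "(x' - qf) * t \<le> (x' - qf) * P x'"
      using \<open>t \<le> P x'\<close> 2 by (intro mult_left_mono) auto
    ultimately show ?thesis using 2 unfolding split_value_def V_q_floor by (simp add: algebra_simps)
  next
    case 3
    have "V P x - V P x' < (x - x') * P x'"
      by (rule V_increment_less) (use q_floor 3 x qe_t in auto)
    then show ?thesis using 3 x t_x' unfolding split_value_def by (simp add: algebra_simps)
  qed
qed

lemma split_value_strict_antimono: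
  assumes t: "t \<in> {a..b}" and x: "qe t \<le> x" "x < x'" "x' \<le> qbar"
  shows "split_value t x' < split_value t x"
proof -
  have qe_t: "0 \<le> qe t" "qe t \<le> qbar" "P (qe t) = t" using q_eff_Theta[OF t] by auto
  have "P x \<le> t" using P_le[of "qe t" x] qe_t x by auto
  then have "(x' - x) * P x \<le> (x' - x) * t" using x by simp
  moreover have "V P x' - V P x < (x' - x) * P x"
    by (rule V_increment_less) (use qe_t x in auto)
  moreover have "qf \<le> x" using q_floor_less_q_eff[OF t] x by simp
  ultimately show ?thesis using x unfolding split_value_def by (simp add: algebra_simps)
qed

lemma split_value_less_q_eff:
  assumes t: "t \<in> {a..b}" and x: "0 \<le> x" "x \<le> qbar" "x \<noteq> qe t"
  shows "split_value t x < split_value t (qe t)"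
  using split_value_strict_mono[OF t x(1)] split_value_strict_antimono[OF t order_refl _ x(2)] x(3)
  by (cases "x < qe t") auto

lemma floor_randomized_if_floor_form:
  fixes r q u z :: "real \<Rightarrow> real"
  assumes "IC_IR a b qbar r q u" and "u b = 0"
    and anti: "antimono_on {a..b} z" and nonneg: "\<And>t. t \<in> {a..b} \<Longrightarrow> 0 \<le> z t"
    and form: "\<And>t. t \<in> {a..b} \<Longrightarrow> r t = floor_prob (z t) \<and> q t = floor_qty (z t)"
  shows "floor_randomized a b qbar c P r q u"
proof -
  define T1 where "T1 = {t \<in> {a..b}. z t \<in> {qf..}}"
  define T01 where "T01 = {t \<in> {a..b}. z t \<in> {0<..<qf}}"
  define T0 where "T0 = {t \<in> {a..b}. z t \<in> {..0}}"
  have ordered: "y < x" if "x \<in> {a..b}" "y \<in> {a..b}" "z x < z y" for x y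
    using anti that unfolding monotone_on_def by (meson not_le order.strict_iff_not)
  have "is_interval T1"
    unfolding T1_def by (rule is_interval_antimono_on_preimage[OF anti is_interval_ci])
  moreover have "is_interval T01"
    unfolding T01_def by (rule is_interval_antimono_on_preimage[OF anti]) (metis box_real(1) is_interval_box)
  moreover have "is_interval T0"
    unfolding T0_def by (rule is_interval_antimono_on_preimage[OF anti is_interval_ic])
  moreover have "T1 \<union> T01 \<union> T0 = {a..b}"
    unfolding T1_def T01_def T0_def using nonneg by fastforce
  moreover have "T1 \<inter> T01 = {}" "T1 \<inter> T0 = {}" "T01 \<inter> T0 = {}"
    unfolding T1_def T01_def T0_def using q_floor(1) by auto
  moreover have "\<forall>x\<in>T0. \<forall>y\<in>T01. y < x" "\<forall>x\<in>T01. \<forall>y\<in>T1. y < x"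
    by (intro ballI; rule ordered; simp add: T1_def T01_def T0_def)+
  moreover have "\<forall>t\<in>T1. qf \<le> q t \<and> r t = 1" "\<forall>t\<in>T01. q t = qf \<and> 0 < r t \<and> r t < 1"
    "\<forall>t\<in>T0. q t = 0 \<and> r t = 0"
    unfolding T1_def T01_def T0_def using form nonneg q_floor(1)
    by (fastforce simp: floor_prob_def floor_qty_def)+
  ultimately show ?thesis
    unfolding floor_randomized_def using assms(1,2)
    by (intro conjI exI[of _ T1] exI[of _ T01] exI[of _ T0]) simp_all
qed

lemma left_continuous_if_floor_form:
  fixes r q z :: "real \<Rightarrow> real"
  assumes nonneg: "\<And>t. t \<in> {a..b} \<Longrightarrow> 0 \<le> z t"
    and left_cont: "\<And>t. t \<in> {a<..b} \<Longrightarrow> (z \<longlongrightarrow> z t) (at_left t)"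
    and form: "\<And>t. t \<in> {a..b} \<Longrightarrow> r t = floor_prob (z t) \<and> q t = floor_qty (z t)"
  shows "left_continuous_mech a b r q"
  unfolding left_continuous_mech_def
proof
  fix t assume t: "t \<in> {a<..b}"
  have z_eq: "q v * r v = z v" if "v \<in> {a..b}" for v
    using form[OF that] floor_qty_mult_prob[OF nonneg[OF that]] by simp
  have "\<forall>\<^sub>F v in at_left t. z v = q v * r v"
    using eventually_at_left_real[of a t] t z_eq by (auto elim: eventually_mono)
  then have "((\<lambda>v. q v * r v) \<longlongrightarrow> z t) (at_left t)"
    using left_cont[OF t] by (simp add: tendsto_cong)
  then show "continuous (at_left t) (\<lambda>v. q v * r v)"
    unfolding continuous_within using z_eq[of t] t by simp
qed

lemma downward_distortion_if_floor_form:
  fixes r q z :: "real \<Rightarrow> real"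
  assumes range: "\<And>t. t \<in> {a..b} \<Longrightarrow> 0 \<le> z t \<and> z t \<le> qe t" and "z a = qe a"
    and form: "\<And>t. t \<in> {a..b} \<Longrightarrow> r t = floor_prob (z t) \<and> q t = floor_qty (z t)"
  shows "downward_distortion a b P qbar q"
proof -
  have "q t \<le> qe t" if "t \<in> {a..b}" for t
    using form[OF that] range[OF that] q_floor_less_q_eff[OF that] by (auto simp: floor_qty_def)
  moreover have "q a = qe a"
    using form[of a] \<open>z a = qe a\<close> q_floor_less_q_eff[of a] a_less_b by (simp add: floor_qty_def)
  ultimately show ?thesis unfolding downward_distortion_def by blast
qed

end

locale IC_IR_mechanism = regulation +
  fixes r q u :: "real \<Rightarrow> real"
  assumes IC_IR: "IC_IR a b qbar r q u"
begin

definition alloc :: "real \<Rightarrow> real" where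
  "alloc t = q t * r t"

definition capped_alloc :: "real \<Rightarrow> real" where
  "capped_alloc t = min (alloc t) (qe t)"

definition envelope :: "real \<Rightarrow> real" where
  "envelope t = (if t \<le> a then qe a else Inf (capped_alloc ` {a..<t}))"

lemma mechanism_values:
  "t \<in> {a..b} \<Longrightarrow> 0 \<le> r t \<and> r t \<le> 1 \<and> 0 \<le> q t \<and> q t \<le> qbar \<and> (q t = 0 \<longleftrightarrow> r t = 0)"
  using IC_IR unfolding IC_IR_def mechanism_def by auto

lemma IC_alloc: "s \<in> {a..b} \<Longrightarrow> t \<in> {a..b} \<Longrightarrow> u t + (t - s) * alloc t \<le> u s"
  using IC_IR unfolding IC_IR_def IC_def alloc_def by (auto simp: mult.assoc)

lemma IR_u: "t \<in> {a..b} \<Longrightarrow> 0 \<le> u t"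
  using IC_IR unfolding IC_IR_def IR_def by auto

lemma alloc_range: "t \<in> {a..b} \<Longrightarrow> 0 \<le> alloc t \<and> alloc t \<le> qbar"
  using mechanism_values[of t] mult_left_le[of "r t" "q t"] unfolding alloc_def by auto

lemma alloc_antimono: "s \<in> {a..b} \<Longrightarrow> t \<in> {a..b} \<Longrightarrow> s \<le> t \<Longrightarrow> alloc t \<le> alloc s"
proof -
  assume s: "s \<in> {a..b}" and t: "t \<in> {a..b}" and "s \<le> t"
  have "(t - s) * alloc t \<le> (t - s) * alloc s"
    using IC_alloc[OF s t] IC_alloc[OF t s] by (simp add: algebra_simps)
  then show ?thesis using \<open>s \<le> t\<close> by (cases "s = t") auto
qed

lemma capped_alloc_nonneg: "s \<in> {a..b} \<Longrightarrow> 0 \<le> capped_alloc s"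
  using alloc_range q_eff_Theta unfolding capped_alloc_def by auto

lemma envelope_le_capped_alloc: "t \<in> {a..b} \<Longrightarrow> s \<in> {a..<t} \<Longrightarrow> envelope t \<le> capped_alloc s"
  unfolding envelope_def
  by (auto intro!: cInf_lower bdd_belowI[of _ 0] capped_alloc_nonneg)

lemma le_envelope:
  "t \<in> {a<..b} \<Longrightarrow> (\<And>s. s \<in> {a..<t} \<Longrightarrow> L \<le> capped_alloc s) \<Longrightarrow> L \<le> envelope t"
  unfolding envelope_def by (auto intro!: cInf_greatest)

lemma envelope_a: "envelope a = qe a"
  unfolding envelope_def by simp

lemma envelope_nonneg: "t \<in> {a..b} \<Longrightarrow> 0 \<le> envelope t"
  using envelope_a q_eff_Theta[of a] a_less_b
  by (cases "t = a") (auto intro!: le_envelope capped_alloc_nonneg)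

lemma envelope_le_q_eff:
  assumes t: "t \<in> {a..b}"
  shows "envelope t \<le> qe t"
proof (cases "t = a")
  case False
  have "envelope t \<le> qbar"
    using envelope_le_capped_alloc[OF t, of a] q_eff_Theta[of a] False t
    unfolding capped_alloc_def by auto
  have "s \<le> P (envelope t)" if s: "a < s" "s < t" for s
  proof -
    have "envelope t \<le> qe s"
      using envelope_le_capped_alloc[OF t, of s] s unfolding capped_alloc_def by auto
    then show ?thesis
      using P_le[of "envelope t" "qe s"] q_eff_Theta[of s] envelope_nonneg[OF t] s t by auto
  qed
  then have "t \<le> P (envelope t)" using False t by (intro dense_le_bounded[of a t]) auto
  then show ?thesis
    using P_less[of "qe t" "envelope t"] q_eff_Theta[OF t] \<open>envelope t \<le> qbar\<close> by force
qed (simp add: envelope_a)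

lemma envelope_antimono: "antimono_on {a..b} envelope"
proof (rule monotone_onI)
  fix s t assume s: "s \<in> {a..b}" and t: "t \<in> {a..b}" and "s \<le> t"
  show "envelope t \<le> envelope s"
  proof (cases "s = a")
    case True
    then show ?thesis using envelope_le_capped_alloc[OF t, of a] envelope_a t
      by (cases "t = a") (auto simp: capped_alloc_def)
  next
    case False
    then show ?thesis
      using s t \<open>s \<le> t\<close> by (intro le_envelope envelope_le_capped_alloc) auto
  qed
qed

lemma alloc_le_envelope:
  assumes t: "t \<in> {a..b}" and "alloc t \<le> qe t"
  shows "alloc t \<le> envelope t"
proof (cases "t = a")
  case False
  show ?thesis
  proof (rule le_envelope)
    fix s assume "s \<in> {a..<t}"
    then show "alloc t \<le> capped_alloc s"
      using alloc_antimono[of s t] q_eff_antimono[of s t] t assms(2)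
      unfolding capped_alloc_def by auto
  qed (use t False in auto)
qed (use assms envelope_a in simp)

lemma envelope_eq_q_eff:
  assumes t: "t \<in> {a..b}" and "qe t < alloc t"
  shows "envelope t = qe t"
proof (cases "t = a")
  case False
  have "qe t \<le> envelope t"
  proof (rule le_envelope)
    fix s assume "s \<in> {a..<t}"
    then show "qe t \<le> capped_alloc s"
      using alloc_antimono[of s t] q_eff_antimono[of s t] t assms(2)
      unfolding capped_alloc_def by auto
  qed (use t False in auto)
  then show ?thesis using envelope_le_q_eff[OF t] by simp
qed (simp add: envelope_a)

text \<open>The information rents of the original mechanism already pay for the envelope allocation.\<close>

lemma envelope_rent_bound:
  assumes "a \<le> s" "s < t" "t \<le> b"
  shows "(t - s) * envelope t \<le> u s - u t"
proof (rule tendsto_upperbound)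
  show "((\<lambda>v. (v - s) * envelope t) \<longlongrightarrow> (t - s) * envelope t) (at_left t)"
    by (intro tendsto_intros)
  have "(v - s) * envelope t \<le> u s - u t" if v: "v \<in> {s<..<t}" for v
  proof -
    have "u v + (v - s) * alloc v \<le> u s" and "u t + (t - v) * alloc t \<le> u v"
      using IC_alloc[of s v] IC_alloc[of v t] v assms by auto
    moreover have "0 \<le> (t - v) * alloc t" using alloc_range[of t] v assms by auto
    moreover have "envelope t \<le> alloc v"
      using envelope_le_capped_alloc[of t v] v assms unfolding capped_alloc_def by auto
    then have "(v - s) * envelope t \<le> (v - s) * alloc v" using v by (intro mult_left_mono) auto
    ultimately show ?thesis by linarith
  qed
  then show "\<forall>\<^sub>F v in at_left t. (v - s) * envelope t \<le> u s - u t"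
    using eventually_at_left_real[OF \<open>s < t\<close>] by (auto elim: eventually_mono)
qed simp

lemma envelope_left_continuous:
  assumes t: "t \<in> {a<..b}"
  shows "(envelope \<longlongrightarrow> envelope t) (at_left t)"
proof (rule order_tendstoI)
  fix w assume "w < envelope t"
  have "w < envelope v" if "v \<in> {a<..<t}" for v
  proof -
    have "envelope t \<le> envelope v"
      using envelope_antimono that t unfolding monotone_on_def by auto
    then show ?thesis using \<open>w < envelope t\<close> by simp
  qed
  then show "\<forall>\<^sub>F v in at_left t. w < envelope v"
    using eventually_at_left_real[of a t] t by (auto elim: eventually_mono)
next
  fix w assume "envelope t < w"
  then obtain s where s: "s \<in> {a..<t}" "capped_alloc s < w"
    using cInf_lessD[of "capped_alloc ` {a..<t}" w] t unfolding envelope_def by auto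
  have "envelope v < w" if "v \<in> {s<..<t}" for v
  proof -
    have "envelope v \<le> capped_alloc s" using envelope_le_capped_alloc[of v s] s that t by auto
    then show ?thesis using s by simp
  qed
  then show "\<forall>\<^sub>F v in at_left t. envelope v < w"
    using eventually_at_left_real[of s t] s by (auto elim: eventually_mono)
qed

definition r_env :: "real \<Rightarrow> real" where
  "r_env t = floor_prob (envelope t)"

definition q_env :: "real \<Rightarrow> real" where
  "q_env t = floor_qty (envelope t)"

definition u_env :: "real \<Rightarrow> real" where
  "u_env t = integral {t..b} envelope"

lemma envelope_range: "t \<in> {a..b} \<Longrightarrow> 0 \<le> envelope t \<and> envelope t \<le> qbar"
  using envelope_nonneg envelope_le_q_eff q_eff_Theta by fastforce

lemma envelope_integrable: "a \<le> s \<Longrightarrow> e \<le> b \<Longrightarrow> envelope integrable_on {s..e}"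
  by (rule antimono_on_integrable, rule monotone_on_subset[OF envelope_antimono]) auto

lemma u_env_split: "a \<le> s \<Longrightarrow> s \<le> t \<Longrightarrow> t \<le> b \<Longrightarrow> u_env s = integral {s..t} envelope + u_env t"
  using Henstock_Kurzweil_Integration.integral_combine[where f = envelope and a = s and c = t and b = b]
    envelope_integrable[of s b]
  unfolding u_env_def by simp

lemma alloc_env: "t \<in> {a..b} \<Longrightarrow> q_env t * r_env t = envelope t"
  unfolding q_env_def r_env_def using floor_qty_mult_prob envelope_nonneg by simp

lemma IC_env: "IC a b r_env q_env u_env"
  unfolding IC_def
proof (intro ballI)
  fix s t assume s: "s \<in> {a..b}" and t: "t \<in> {a..b}"
  have "u_env t + (t - s) * envelope t \<le> u_env s"
  proof (cases "s \<le> t")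
    case True
    have "(t - s) * envelope t \<le> integral {s..t} envelope"
      using s t True by (intro antimono_on_integral_bounds(1) monotone_on_subset[OF envelope_antimono]) auto
    then show ?thesis using u_env_split[of s t] s t True by simp
  next
    case False
    have "integral {t..s} envelope \<le> (s - t) * envelope t"
      using s t False by (intro antimono_on_integral_bounds(2) monotone_on_subset[OF envelope_antimono]) auto
    then show ?thesis using u_env_split[of t s] s t False by (simp add: algebra_simps)
  qed
  then show "u_env t + (t - s) * q_env t * r_env t \<le> u_env s"
    using alloc_env[OF t] by (simp add: mult.assoc)
qed

lemma IC_IR_env: "IC_IR a b qbar r_env q_env u_env"
proof -
  have "mechanism a b qbar r_env q_env u_env"
    unfolding mechanism_def r_env_def q_env_def
    using floor_prob_range floor_qty_range floor_qty_eq_0_iff envelope_range by auto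
  moreover have "IR a b u_env"
    unfolding IR_def u_env_def by (auto intro!: integral_nonneg envelope_integrable envelope_nonneg)
  ultimately show ?thesis using IC_env unfolding IC_IR_def by simp
qed

lemma u_env_b: "u_env b = 0"
  unfolding u_env_def by simp

lemma u_env_le_u:
  assumes t: "t \<in> {a..b}"
  shows "u_env t \<le> u t"
proof -
  have "u_env t \<le> u t - u b"
    unfolding u_env_def
  proof (rule antimono_on_integral_le_of_step_bound[where B = qbar])
    show "antimono_on {t..b} envelope" using t by (intro monotone_on_subset[OF envelope_antimono]) auto
  qed (use t envelope_range envelope_rent_bound in auto)
  then show ?thesis using IR_u[of b] a_less_b by simp
qed

lemma split_value_alloc_less_envelope:
  assumes t: "t \<in> {a..b}" and "alloc t \<noteq> envelope t"
  shows "split_value t (alloc t) < split_value t (envelope t)"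
proof (cases "alloc t \<le> qe t")
  case True
  then have "alloc t < envelope t" using alloc_le_envelope[OF t] assms(2) by simp
  then show ?thesis
    using split_value_strict_mono[OF t _ _ envelope_le_q_eff[OF t]] alloc_range[OF t] by simp
next
  case False
  then show ?thesis
    using split_value_less_q_eff[OF t] alloc_range[OF t] envelope_eq_q_eff[OF t] by simp
qed

lemma TS_le_split_value_alloc: "t \<in> {a..b} \<Longrightarrow> r t * TS c P t (q t) \<le> split_value t (alloc t)"
  using randomized_TS_le_split_value mechanism_values unfolding alloc_def by simp

lemma RS_env_minus_RS:
  assumes t: "t \<in> {a..b}"
  shows "RS c P \<alpha> t r_env q_env u_env - RS c P \<alpha> t r q u =
    (split_value t (envelope t) - r t * TS c P t (q t)) + (1 - \<alpha>) * (u t - u_env t)"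
  using floor_TS_eq_split_value[of "envelope t" t] envelope_nonneg[OF t]
  unfolding RS_def r_env_def q_env_def by (simp add: algebra_simps)

lemma RS_le_RS_env:
  assumes t: "t \<in> {a..b}"
  shows "RS c P \<alpha> t r q u \<le> RS c P \<alpha> t r_env q_env u_env"
proof -
  have "0 \<le> (1 - \<alpha>) * (u t - u_env t)" using u_env_le_u[OF t] alpha_less_1 by simp
  moreover have "r t * TS c P t (q t) \<le> split_value t (envelope t)"
    using TS_le_split_value_alloc[OF t] split_value_alloc_less_envelope[OF t]
    by (cases "alloc t = envelope t") auto
  ultimately show ?thesis using RS_env_minus_RS[OF t] by linarith
qed

lemma RS_eq_RS_env_imp:
  assumes t: "t \<in> {a..b}" and "RS c P \<alpha> t r q u = RS c P \<alpha> t r_env q_env u_env"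
  shows "r t = r_env t \<and> q t = q_env t \<and> u t = u_env t"
proof -
  have rent: "0 \<le> (1 - \<alpha>) * (u t - u_env t)" using u_env_le_u[OF t] alpha_less_1 by simp
  have "split_value t (alloc t) \<le> split_value t (envelope t)"
    using split_value_alloc_less_envelope[OF t] by (cases "alloc t = envelope t") auto
  then have surplus: "r t * TS c P t (q t) \<le> split_value t (envelope t)"
    using TS_le_split_value_alloc[OF t] by simp
  have "(split_value t (envelope t) - r t * TS c P t (q t)) + (1 - \<alpha>) * (u t - u_env t) = 0"
    using RS_env_minus_RS[OF t] assms(2) by simp
  then have "(1 - \<alpha>) * (u t - u_env t) = 0" and TS_eq: "r t * TS c P t (q t) = split_value t (envelope t)"
    using rent surplus by linarith+
  then have "u t = u_env t" using alpha_less_1 by simp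
  moreover have "alloc t = envelope t"
    using TS_eq TS_le_split_value_alloc[OF t] split_value_alloc_less_envelope[OF t] by fastforce
  moreover have "r t = floor_prob (alloc t) \<and> q t = floor_qty (alloc t)"
    using randomized_TS_less_split_value[of "r t" "q t" t] mechanism_values[OF t] TS_eq
      \<open>alloc t = envelope t\<close> unfolding alloc_def by fastforce
  ultimately show ?thesis unfolding r_env_def q_env_def by simp
qed

lemma envelope_nonneg_le_q_eff: "t \<in> {a..b} \<Longrightarrow> 0 \<le> envelope t \<and> envelope t \<le> qe t"
  using envelope_nonneg envelope_le_q_eff by simp

lemma env_properties:
  "floor_randomized a b qbar c P r_env q_env u_env \<and> left_continuous_mech a b r_env q_env \<and>
    downward_distortion a b P qbar q_env"
proof -
  have form: "r_env t = floor_prob (envelope t) \<and> q_env t = floor_qty (envelope t)" for t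
    by (simp add: r_env_def q_env_def)
  show ?thesis
    using floor_randomized_if_floor_form[OF IC_IR_env u_env_b envelope_antimono envelope_nonneg form]
      left_continuous_if_floor_form[OF envelope_nonneg envelope_left_continuous form]
      downward_distortion_if_floor_form[OF envelope_nonneg_le_q_eff envelope_a form]
    by simp
qed

lemma undominated_properties:
  assumes undominated: "\<not> (\<exists>r' q' u'. dominates a b qbar c P \<alpha> r' q' u' r q u)"
  shows "floor_randomized a b qbar c P r q u \<and> left_continuous_mech a b r q \<and>
    downward_distortion a b P qbar q"
proof -
  have RS_eq: "RS c P \<alpha> t r q u = RS c P \<alpha> t r_env q_env u_env" if t: "t \<in> {a..b}" for t
  proof (rule ccontr)
    assume "RS c P \<alpha> t r q u \<noteq> RS c P \<alpha> t r_env q_env u_env"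
    then have "RS c P \<alpha> t r q u < RS c P \<alpha> t r_env q_env u_env" using RS_le_RS_env[OF t] by simp
    then have "dominates a b qbar c P \<alpha> r_env q_env u_env r q u"
      unfolding dominates_def using IC_IR_env IC_IR RS_le_RS_env t by blast
    then show False using undominated by blast
  qed
  have form: "r t = floor_prob (envelope t) \<and> q t = floor_qty (envelope t)" if "t \<in> {a..b}" for t
    using RS_eq_RS_env_imp[OF that RS_eq[OF that]] unfolding r_env_def q_env_def by simp
  have "u b = 0" using RS_eq_RS_env_imp[OF _ RS_eq, of b] u_env_b a_less_b by simp
  then show ?thesis
    using floor_randomized_if_floor_form[OF IC_IR _ envelope_antimono envelope_nonneg form]
      left_continuous_if_floor_form[OF envelope_nonneg envelope_left_continuous form]
      downward_distortion_if_floor_form[OF envelope_nonneg_le_q_eff envelope_a form]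
    by simp
qed

lemma dominates_env_if_dominates:
  assumes "dominates a b qbar c P \<alpha> r q u r0 q0 u0"
  shows "dominates a b qbar c P \<alpha> r_env q_env u_env r0 q0 u0"
  using assms IC_IR_env RS_le_RS_env unfolding dominates_def by (meson order_trans less_le_trans)

end

theorem theorem2:
  fixes tlo thi c qbar \<alpha> :: real and P r q u :: "real \<Rightarrow> real"
  assumes "0 < tlo" and "tlo < thi" and "0 < c" and "0 < qbar"
    and "continuous_on {0..qbar} P"
    and "\<forall>x y. 0 \<le> x \<longrightarrow> x < y \<longrightarrow> y \<le> qbar \<longrightarrow> P y < P x"
    and "P qbar = 0"
    and A2: "\<exists>qe\<in>{0..qbar}. P qe = thi \<and> TS c P thi qe > 0"
    and "0 \<le> \<alpha>" and "\<alpha> < 1"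
    and "IC_IR tlo thi qbar r q u"
  shows "(undominated tlo thi qbar c P \<alpha> r q u \<longrightarrow>
            floor_randomized tlo thi qbar c P r q u \<and> left_continuous_mech tlo thi r q \<and>
            downward_distortion tlo thi P qbar q)
       \<and> ((\<exists>r' q' u'. dominates tlo thi qbar c P \<alpha> r' q' u' r q u) \<longrightarrow>
            (\<exists>r' q' u'. dominates tlo thi qbar c P \<alpha> r' q' u' r q u \<and>
               floor_randomized tlo thi qbar c P r' q' u' \<and> left_continuous_mech tlo thi r' q' \<and>
               downward_distortion tlo thi P qbar q'))"
proof -
  interpret M: IC_IR_mechanism tlo thi c qbar \<alpha> P r q u
    by unfold_locales (use assms in auto)
  show ?thesis
  proof (rule conjI; rule impI)
    assume "undominated tlo thi qbar c P \<alpha> r q u"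
    then show "floor_randomized tlo thi qbar c P r q u \<and> left_continuous_mech tlo thi r q \<and>
        downward_distortion tlo thi P qbar q"
      unfolding undominated_def by (intro M.undominated_properties) blast
  next
    assume "\<exists>r' q' u'. dominates tlo thi qbar c P \<alpha> r' q' u' r q u"
    then obtain r1 q1 u1 where dom: "dominates tlo thi qbar c P \<alpha> r1 q1 u1 r q u" by blast
    then have "IC_IR tlo thi qbar r1 q1 u1" unfolding dominates_def by blast
    then interpret M1: IC_IR_mechanism tlo thi c qbar \<alpha> P r1 q1 u1 by unfold_locales
    show "\<exists>r' q' u'. dominates tlo thi qbar c P \<alpha> r' q' u' r q u \<and>
        floor_randomized tlo thi qbar c P r' q' u' \<and> left_continuous_mech tlo thi r' q' \<and>
        downward_distortion tlo thi P qbar q'"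
      using M1.dominates_env_if_dominates[OF dom] M1.env_properties by blast
  qed
qed

end
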